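(* Let $G$ be an SE-graph and let $P,Q$ be standard, weakly intersecting directed paths in $G$ with $\alpha(t_P)=\alpha(s_Q)$ and $\beta(t_P)<\beta(s_Q)$. Then $w(P)w(Q)=q^{-1}\,w(Q)w(P)$.
   Context: Fix a field $\mathbb K$, $q\in\mathbb K^\ast$. An SE-graph is a finite directed graph $G=(V,E)$ embedded in the plane (planar) whose edges are horizontal directed to the right (H-edges) or vertical directed downward (V-edges), with sources $r_1,\dots,r_m$ on a vertical line in this order upward and sinks $c_1,\dots,c_n$ on a horizontal line in order left to right, sources incident only to H-edges and sinks only to V-edges, every vertex lying on a directed source-to-sink path. Here the sources lie on the ray $\{0\}\times\mathbb R_{\ge0}$ and the sinks on the ray $\mathbb R_{\ge 0}\times\{0\}$; a point $v$ has coordinates $(\alpha(v),\beta(v))$. Standing convention: two vertices have the same first (resp. second) coordinate if and only if they lie on a common vertical (resp. horizontal) directed path of $G$. Let $W$ be the inner vertices; $\mathcal L_G$ is the $\mathbb K$-algebra of Laurent polynomials in $W$ with, for distinct $u,v\in W$: $uv=qvu$ if there is a directed horizontal path from $u$ to $v$; $vu=quv$ if there is a directed vertical path from $u$ to $v$; $uv=vu$ otherwise. Edge weights: $w(e)=v$ if $e=(u,v)$ with $u$ a source; $w(e)=u^{-1}v$ for an H-edge $e=(u,v)$ with $u,v\in W$; $w(e)=1$ for V-edges. The weight of a directed path is the ordered product of its edge weights. For a directed path $P$, $s_P,t_P$ are its first and last vertices; $P$ is standard if it has at least one H-edge. $P,Q$ are weakly intersecting if $P\cap Q=\{s_P,t_P\}\cap\{s_Q,t_Q\}$.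 *)

theory Defs
  imports "HOL-Analysis.Analysis"
begin

definition pt :: "('v \<Rightarrow> real) \<Rightarrow> ('v \<Rightarrow> real) \<Rightarrow> 'v \<Rightarrow> real \<times> real" where
  "pt \<alpha> \<beta> v = (\<alpha> v, \<beta> v)"

definition H_edge :: "('v \<Rightarrow> real) \<Rightarrow> ('v \<Rightarrow> real) \<Rightarrow> 'v \<times> 'v \<Rightarrow> bool" where
  "H_edge \<alpha> \<beta> e \<longleftrightarrow> \<beta> (fst e) = \<beta> (snd e) \<and> \<alpha> (fst e) < \<alpha> (snd e)"

definition V_edge :: "('v \<Rightarrow> real) \<Rightarrow> ('v \<Rightarrow> real) \<Rightarrow> 'v \<times> 'v \<Rightarrow> bool" where
  "V_edge \<alpha> \<beta> e \<longleftrightarrow> \<alpha> (fst e) = \<alpha> (snd e) \<and> \<beta> (snd e) < \<beta> (fst e)"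

definition dpath :: "'v set \<Rightarrow> ('v \<times> 'v) set \<Rightarrow> 'v list \<Rightarrow> bool" where
  "dpath V E xs \<longleftrightarrow> xs \<noteq> [] \<and> set xs \<subseteq> V \<and> (\<forall>i. Suc i < length xs \<longrightarrow> (xs ! i, xs ! Suc i) \<in> E)"

definition path_edges :: "'v list \<Rightarrow> ('v \<times> 'v) list" where
  "path_edges xs = zip xs (tl xs)"

definition hpath :: "'v set \<Rightarrow> ('v \<times> 'v) set \<Rightarrow> ('v \<Rightarrow> real) \<Rightarrow> ('v \<Rightarrow> real) \<Rightarrow> 'v \<Rightarrow> 'v \<Rightarrow> bool" where
  "hpath V E \<alpha> \<beta> u v \<longleftrightarrow> (\<exists>xs. dpath V E xs \<and> hd xs = u \<and> last xs = v \<and>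
       (\<forall>e\<in>set (path_edges xs). H_edge \<alpha> \<beta> e))"

definition vpath :: "'v set \<Rightarrow> ('v \<times> 'v) set \<Rightarrow> ('v \<Rightarrow> real) \<Rightarrow> ('v \<Rightarrow> real) \<Rightarrow> 'v \<Rightarrow> 'v \<Rightarrow> bool" where
  "vpath V E \<alpha> \<beta> u v \<longleftrightarrow> (\<exists>xs. dpath V E xs \<and> hd xs = u \<and> last xs = v \<and>
       (\<forall>e\<in>set (path_edges xs). V_edge \<alpha> \<beta> e))"

definition common_vpath :: "'v set \<Rightarrow> ('v \<times> 'v) set \<Rightarrow> ('v \<Rightarrow> real) \<Rightarrow> ('v \<Rightarrow> real) \<Rightarrow> 'v \<Rightarrow> 'v \<Rightarrow> bool" where
  "common_vpath V E \<alpha> \<beta> u v \<longleftrightarrow> (\<exists>xs. dpath V E xs \<and> u \<in> set xs \<and> v \<in> set xs \<and>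
       (\<forall>e\<in>set (path_edges xs). V_edge \<alpha> \<beta> e))"

definition common_hpath :: "'v set \<Rightarrow> ('v \<times> 'v) set \<Rightarrow> ('v \<Rightarrow> real) \<Rightarrow> ('v \<Rightarrow> real) \<Rightarrow> 'v \<Rightarrow> 'v \<Rightarrow> bool" where
  "common_hpath V E \<alpha> \<beta> u v \<longleftrightarrow> (\<exists>xs. dpath V E xs \<and> u \<in> set xs \<and> v \<in> set xs \<and>
       (\<forall>e\<in>set (path_edges xs). H_edge \<alpha> \<beta> e))"

definition inner :: "'v set \<Rightarrow> 'v list \<Rightarrow> 'v list \<Rightarrow> 'v set" where
  "inner V r c = V - set r - set c"

definition se_graph :: "'v set \<Rightarrow> ('v \<times> 'v) set \<Rightarrow> ('v \<Rightarrow> real) \<Rightarrow> ('v \<Rightarrow> real) \<Rightarrow> 'v list \<Rightarrow> 'v list \<Rightarrow> bool" where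
  "se_graph V E \<alpha> \<beta> r c \<longleftrightarrow>
     finite V \<and> E \<subseteq> V \<times> V \<and>
     (\<forall>e\<in>E. H_edge \<alpha> \<beta> e \<or> V_edge \<alpha> \<beta> e) \<and>
     \<comment> \<open>planar embedding with straight edges\<close>
     inj_on (pt \<alpha> \<beta>) V \<and>
     (\<forall>a b a' b'. (a, b) \<in> E \<longrightarrow> (a', b') \<in> E \<longrightarrow> (a, b) \<noteq> (a', b') \<longrightarrow>
        closed_segment (pt \<alpha> \<beta> a) (pt \<alpha> \<beta> b) \<inter> closed_segment (pt \<alpha> \<beta> a') (pt \<alpha> \<beta> b')
          \<subseteq> {pt \<alpha> \<beta> a, pt \<alpha> \<beta> b} \<inter> {pt \<alpha> \<beta> a', pt \<alpha> \<beta> b'}) \<and>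
     (\<forall>v\<in>V. \<forall>a b. (a, b) \<in> E \<longrightarrow> pt \<alpha> \<beta> v \<in> closed_segment (pt \<alpha> \<beta> a) (pt \<alpha> \<beta> b) \<longrightarrow> v = a \<or> v = b) \<and>
     \<comment> \<open>sources and sinks\<close>
     distinct r \<and> distinct c \<and> set r \<subseteq> V \<and> set c \<subseteq> V \<and> set r \<inter> set c = {} \<and>
     (\<forall>i<length r. \<alpha> (r ! i) = 0 \<and> 0 \<le> \<beta> (r ! i)) \<and>
     (\<forall>i j. i < j \<and> j < length r \<longrightarrow> \<beta> (r ! i) < \<beta> (r ! j)) \<and>
     (\<forall>j<length c. \<beta> (c ! j) = 0 \<and> 0 \<le> \<alpha> (c ! j)) \<and>
     (\<forall>i j. i < j \<and> j < length c \<longrightarrow> \<alpha> (c ! i) < \<alpha> (c ! j)) \<and>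
     (\<forall>s\<in>set r. \<forall>a b. (a, b) \<in> E \<longrightarrow> b \<noteq> s \<and> (a = s \<longrightarrow> H_edge \<alpha> \<beta> (a, b))) \<and>
     (\<forall>t\<in>set c. \<forall>a b. (a, b) \<in> E \<longrightarrow> a \<noteq> t \<and> (b = t \<longrightarrow> V_edge \<alpha> \<beta> (a, b))) \<and>
     \<comment> \<open>every vertex lies on a source-to-sink path\<close>
     (\<forall>v\<in>V. \<exists>xs. dpath V E xs \<and> hd xs \<in> set r \<and> last xs \<in> set c \<and> v \<in> set xs) \<and>
     \<comment> \<open>standing convention\<close>
     (\<forall>u\<in>V. \<forall>v\<in>V. (u \<in> inner V r c \<or> v \<in> inner V r c) \<longrightarrow>
        (\<alpha> u = \<alpha> v \<longleftrightarrow> common_vpath V E \<alpha> \<beta> u v) \<and>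
        (\<beta> u = \<beta> v \<longleftrightarrow> common_hpath V E \<alpha> \<beta> u v))"

section \<open>The quantum torus L_G via its universal property\<close>

text \<open>emb makes the ring 'a a K-algebra (K = 'k): a unital ring homomorphism into the centre.\<close>
definition scalar_embedding :: "('k::field \<Rightarrow> 'a::ring_1) \<Rightarrow> bool" where
  "scalar_embedding emb \<longleftrightarrow> emb 1 = 1 \<and> (\<forall>a b. emb (a + b) = emb a + emb b) \<and>
     (\<forall>a b. emb (a * b) = emb a * emb b) \<and> (\<forall>a y. emb a * y = y * emb a)"

definition LG_relations :: "'v set \<Rightarrow> ('v \<times> 'v) set \<Rightarrow> ('v \<Rightarrow> real) \<Rightarrow> ('v \<Rightarrow> real) \<Rightarrow> 'v set
    \<Rightarrow> 'a::ring_1 \<Rightarrow> ('v \<Rightarrow> 'a) \<Rightarrow> bool" where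
  "LG_relations V E \<alpha> \<beta> W q x \<longleftrightarrow>
     (\<forall>u\<in>W. \<forall>v\<in>W. u \<noteq> v \<longrightarrow>
        (hpath V E \<alpha> \<beta> u v \<longrightarrow> x u * x v = q * (x v * x u)) \<and>
        (vpath V E \<alpha> \<beta> u v \<longrightarrow> x v * x u = q * (x u * x v)) \<and>
        (\<not> hpath V E \<alpha> \<beta> u v \<and> \<not> hpath V E \<alpha> \<beta> v u \<and> \<not> vpath V E \<alpha> \<beta> u v \<and> \<not> vpath V E \<alpha> \<beta> v u
           \<longrightarrow> x u * x v = x v * x u))"

text \<open>Edge weights (xi w is the inverse of x w) and path weights (ordered products).\<close>
definition edge_wt :: "('v \<Rightarrow> real) \<Rightarrow> ('v \<Rightarrow> real) \<Rightarrow> 'v list \<Rightarrow> 'v set \<Rightarrow> ('v \<Rightarrow> 'a::ring_1)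
    \<Rightarrow> ('v \<Rightarrow> 'a) \<Rightarrow> 'v \<times> 'v \<Rightarrow> 'a" where
  "edge_wt \<alpha> \<beta> r W x xi e =
     (if fst e \<in> set r then x (snd e)
      else if H_edge \<alpha> \<beta> e \<and> fst e \<in> W \<and> snd e \<in> W then xi (fst e) * x (snd e)
      else 1)"

definition path_wt :: "('v \<Rightarrow> real) \<Rightarrow> ('v \<Rightarrow> real) \<Rightarrow> 'v list \<Rightarrow> 'v set \<Rightarrow> ('v \<Rightarrow> 'a::ring_1)
    \<Rightarrow> ('v \<Rightarrow> 'a) \<Rightarrow> 'v list \<Rightarrow> 'a" where
  "path_wt \<alpha> \<beta> r W x xi xs = prod_list (map (edge_wt \<alpha> \<beta> r W x xi) (path_edges xs))"

definition standard :: "('v \<Rightarrow> real) \<Rightarrow> ('v \<Rightarrow> real) \<Rightarrow> 'v list \<Rightarrow> bool" where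
  "standard \<alpha> \<beta> xs \<longleftrightarrow> (\<exists>e\<in>set (path_edges xs). H_edge \<alpha> \<beta> e)"

definition weakly_intersecting :: "'v list \<Rightarrow> 'v list \<Rightarrow> bool" where
  "weakly_intersecting P Q \<longleftrightarrow> set P \<inter> set Q = {hd P, last P} \<inter> {hd Q, last Q}"

end

theory Submission
  imports Defs
begin

text \<open>Write w(P) and w(Q) as words in the generators x w (w inner) and their inverses.  If u
  lies to the left of or below v, the defining relations of L_G give x u * x v = q^e * x v * x u,
  where e counts the coordinates shared by u and v.  This applies to every u on P and v on Q:
  P lies weakly left of the column \<alpha>(t P) = \<alpha>(s Q) and Q weakly right of it, and inside that
  column P lies strictly below Q, since otherwise a vertical piece of one path would run through
  a vertex of the other.  So w(P) w(Q) = q^N w(Q) w(P), where N sums e over pairs of letters,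
  weighted by their signs.  For a fixed letter of w(P) at u, the signed count of letters of w(Q)
  in the row of u telescopes to 0, as H-edges keep the row, and in the column of u to
  -[\<alpha> u = \<alpha>(s Q)], as V-edges keep the column and Q starts in the column \<alpha>(s Q) and leaves it.
  The remaining sum telescopes along P to -1.\<close>

section \<open>q-commutation\<close>

definition qcomm :: "('k::field \<Rightarrow> 'a::ring_1) \<Rightarrow> 'k \<Rightarrow> 'a \<Rightarrow> 'a \<Rightarrow> int \<Rightarrow> bool" where
  "qcomm emb q a b n \<longleftrightarrow> a * b = emb (q powi n) * (b * a)"

context
  fixes emb :: "'k::field \<Rightarrow> 'a::ring_1"
  assumes emb: "scalar_embedding emb"
begin

lemma emb_one: "emb 1 = 1"
  using emb unfolding scalar_embedding_def by blast

lemma emb_mult: "emb (a * b) = emb a * emb b"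
  using emb unfolding scalar_embedding_def by blast

lemma emb_commute: "emb a * y = y * emb a"
  using emb unfolding scalar_embedding_def by blast

lemma qcomm_1_left: "qcomm emb q 1 b 0"
  by (simp add: qcomm_def emb_one)

lemma qcomm_1_right: "qcomm emb q a 1 0"
  by (simp add: qcomm_def emb_one)

context
  fixes q :: 'k
  assumes q: "q \<noteq> 0"
begin

lemma emb_powi_add: "emb (q powi (m + n)) = emb (q powi m) * emb (q powi n)"
  using q by (simp add: power_int_add emb_mult)

lemma qcomm_mult_left:
  assumes "qcomm emb q a b m" "qcomm emb q a' b n"
  shows "qcomm emb q (a * a') b (m + n)"
proof -
  have "a * a' * b = a * (emb (q powi n) * (b * a'))"
    using assms(2) by (simp add: qcomm_def mult.assoc)
  also have "\<dots> = emb (q powi n) * ((a * b) * a')"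
    by (metis emb_commute mult.assoc)
  also have "\<dots> = emb (q powi n) * (emb (q powi m) * (b * a) * a')"
    using assms(1) by (simp add: qcomm_def)
  also have "\<dots> = emb (q powi m) * emb (q powi n) * (b * (a * a'))"
    by (metis emb_commute mult.assoc)
  also have "\<dots> = emb (q powi (m + n)) * (b * (a * a'))"
    by (simp add: emb_powi_add)
  finally show ?thesis by (simp add: qcomm_def)
qed

lemma qcomm_mult_right:
  assumes "qcomm emb q a b m" "qcomm emb q a b' n"
  shows "qcomm emb q a (b * b') (m + n)"
proof -
  have "a * (b * b') = (a * b) * b'"
    by (simp add: mult.assoc)
  also have "\<dots> = emb (q powi m) * (b * (a * b'))"
    using assms(1) by (simp add: qcomm_def mult.assoc)
  also have "\<dots> = emb (q powi m) * (b * emb (q powi n) * (b' * a))"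
    using assms(2) by (simp add: qcomm_def mult.assoc)
  also have "\<dots> = emb (q powi m) * emb (q powi n) * (b * b' * a)"
    by (metis emb_commute mult.assoc)
  also have "\<dots> = emb (q powi (m + n)) * (b * b' * a)"
    by (simp add: emb_powi_add)
  finally show ?thesis by (simp add: qcomm_def)
qed

lemma qcomm_swap:
  assumes "qcomm emb q a b n"
  shows "qcomm emb q b a (- n)"
proof -
  have "emb (q powi (- n)) * (a * b) = emb (q powi (- n)) * emb (q powi n) * (b * a)"
    using assms by (simp add: qcomm_def mult.assoc)
  also have "\<dots> = b * a"
    by (simp add: emb_one flip: emb_powi_add)
  finally show ?thesis by (simp add: qcomm_def)
qed

lemma qcomm_inverse_left:
  assumes "qcomm emb q a b n" and "a * a' = 1" "a' * a = 1"
  shows "qcomm emb q a' b (- n)"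
proof -
  have "b * a' = a' * (a * b) * a'"
    using assms(2,3) by (simp flip: mult.assoc)
  also have "\<dots> = a' * emb (q powi n) * (b * (a * a'))"
    using assms(1) by (simp add: qcomm_def mult.assoc)
  also have "\<dots> = emb (q powi n) * (a' * b)"
    using assms(2) by (simp add: emb_commute mult.assoc)
  finally show ?thesis
    using qcomm_swap by (simp add: qcomm_def)
qed

lemma qcomm_inverse_right:
  assumes "qcomm emb q a b n" and "b * b' = 1" "b' * b = 1"
  shows "qcomm emb q a b' (- n)"
  using qcomm_swap[OF qcomm_inverse_left[OF qcomm_swap[OF assms(1)] assms(2,3)]] by simp

lemma qcomm_prod_list_right:
  assumes "\<And>b. b \<in> set bs \<Longrightarrow> qcomm emb q a (h b) (f b)"
  shows "qcomm emb q a (\<Prod>b\<leftarrow>bs. h b) (\<Sum>b\<leftarrow>bs. f b)"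
  using assms by (induction bs) (auto intro: qcomm_1_right qcomm_mult_right)

lemma qcomm_prod_list:
  assumes "\<And>a b. a \<in> set as \<Longrightarrow> b \<in> set bs \<Longrightarrow> qcomm emb q (g a) (h b) (f a b)"
  shows "qcomm emb q (\<Prod>a\<leftarrow>as. g a) (\<Prod>b\<leftarrow>bs. h b) (\<Sum>a\<leftarrow>as. \<Sum>b\<leftarrow>bs. f a b)"
  using assms by (induction as) (auto intro: qcomm_1_left qcomm_mult_left qcomm_prod_list_right)

end

end

definition letter :: "('v \<Rightarrow> 'a::ring_1) \<Rightarrow> ('v \<Rightarrow> 'a) \<Rightarrow> 'v \<times> bool \<Rightarrow> 'a" where
  "letter x xi a = (if snd a then x (fst a) else xi (fst a))"

definition letter_sign :: "'v \<times> bool \<Rightarrow> int" where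
  "letter_sign a = (if snd a then 1 else -1)"

lemma qcomm_letter:
  assumes "scalar_embedding emb" "q \<noteq> 0" and "qcomm emb q (x (fst a)) (x (fst b)) n"
    and "x (fst a) * xi (fst a) = 1" "xi (fst a) * x (fst a) = 1"
    and "x (fst b) * xi (fst b) = 1" "xi (fst b) * x (fst b) = 1"
  shows "qcomm emb q (letter x xi a) (letter x xi b) (letter_sign a * letter_sign b * n)"
proof -
  note inv_left = qcomm_inverse_left[OF assms(1,2)] and inv_right = qcomm_inverse_right[OF assms(1,2)]
  have "qcomm emb q (xi (fst a)) (x (fst b)) (- n)" "qcomm emb q (x (fst a)) (xi (fst b)) (- n)"
    using inv_left[OF assms(3-5)] inv_right[OF assms(3,6,7)] by auto
  moreover have "qcomm emb q (xi (fst a)) (xi (fst b)) n"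
    using inv_right[OF inv_left[OF assms(3-5)] assms(6,7)] by simp
  ultimately show ?thesis
    using assms(3) by (cases "snd a"; cases "snd b") (simp_all add: letter_def letter_sign_def)
qed

lemma prod_list_concat: "prod_list (concat xss) = (\<Prod>xs\<leftarrow>xss. prod_list xs)"
  by (induction xss) auto

lemma sum_list_concat: "sum_list (concat xss) = (\<Sum>xs\<leftarrow>xss. sum_list xs)"
  by (induction xss) auto

lemma in_path_edges: "e \<in> set (path_edges xs) \<longleftrightarrow> (\<exists>k. Suc k < length xs \<and> e = (xs ! k, xs ! Suc k))"
proof -
  have "e \<in> set (zip xs (tl xs)) \<longleftrightarrow> (\<exists>k<length xs - 1. e = (xs ! k, tl xs ! k))"
    by (auto simp: set_zip)
  then show ?thesis
    unfolding path_edges_def by (auto simp: nth_tl less_diff_conv)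
qed

lemma path_edges_Cons_Cons: "path_edges (a # b # xs) = (a, b) # path_edges (b # xs)"
  by (simp add: path_edges_def)

lemma nth_edge_in_path_edges: "Suc k < length xs \<Longrightarrow> (xs ! k, xs ! Suc k) \<in> set (path_edges xs)"
  by (auto simp: in_path_edges)

lemma dpath_edge: "dpath V E xs \<Longrightarrow> e \<in> set (path_edges xs) \<Longrightarrow> e \<in> E"
  by (auto simp: dpath_def in_path_edges)

lemma sum_path_edges_telescope:
  "xs \<noteq> [] \<Longrightarrow> (\<Sum>e\<leftarrow>path_edges xs. g (snd e) - g (fst e)) = g (last xs) - (g (hd xs) :: 'b::ab_group_add)"
proof (induction xs rule: induct_list012)
  case (3 a b xs)
  then show ?case by (simp add: path_edges_Cons_Cons)
qed (simp_all add: path_edges_def)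

lemma path_edges_chain:
  assumes "transp R" and edges: "\<forall>e\<in>set (path_edges xs). R (f (fst e)) (f (snd e))"
    and "i < j" "j < length xs"
  shows "R (f (xs ! i)) (f (xs ! j))"
proof -
  have "transp (\<lambda>u v. R (f u) (f v))"
    using \<open>transp R\<close> by (auto intro: transpI dest: transpD)
  moreover have "\<forall>k. Suc k < length xs \<longrightarrow> R (f (xs ! k)) (f (xs ! Suc k))"
    using edges nth_edge_in_path_edges by fastforce
  ultimately have "sorted_wrt (\<lambda>u v. R (f u) (f v)) xs"
    by (simp add: sorted_wrt_iff_nth_Suc_transp)
  then show ?thesis
    using assms(3,4) by (rule sorted_wrt_nth_less)
qed

lemma path_edges_chain_mem:
  assumes "transp R" "reflp R" "\<forall>e\<in>set (path_edges xs). R (f (fst e)) (f (snd e))" "v \<in> set xs"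
  shows "R (f (hd xs)) (f v) \<and> R (f v) (f (last xs))"
proof -
  obtain j where j: "j < length xs" "v = xs ! j"
    using assms(4) by (auto simp: in_set_conv_nth)
  have le: "R (f (xs ! i)) (f (xs ! k))" if "i \<le> k" "k < length xs" for i k
    using path_edges_chain[OF assms(1,3), of i k] that reflpD[OF assms(2)] by (cases "i = k") auto
  have "xs \<noteq> []"
    using j by auto
  then show ?thesis
    using le[of 0 j] le[of j "length xs - 1"] j by (simp add: hd_conv_nth last_conv_nth)
qed

lemma dpath_segment:
  assumes d: "dpath V E xs" and "i \<le> j" "j < length xs"
  obtains ys where "dpath V E ys" "hd ys = xs ! i" "last ys = xs ! j" "set ys \<subseteq> set xs"
    "set (path_edges ys) \<subseteq> set (path_edges xs)"
proof
  define ys where "ys = take (Suc j - i) (drop i xs)"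
  have len: "length ys = Suc j - i" and nth: "\<And>k. k < Suc j - i \<Longrightarrow> ys ! k = xs ! (i + k)"
    using assms(2,3) by (simp_all add: ys_def)
  have ne: "ys \<noteq> []"
    using len assms(2) by auto
  show sub: "set ys \<subseteq> set xs"
    unfolding ys_def by (meson order_trans set_drop_subset set_take_subset)
  show edges: "set (path_edges ys) \<subseteq> set (path_edges xs)"
  proof
    fix e assume "e \<in> set (path_edges ys)"
    then obtain k where "Suc k < length ys" "e = (ys ! k, ys ! Suc k)"
      by (auto simp: in_path_edges)
    then show "e \<in> set (path_edges xs)"
      using nth len assms(2,3) by (auto simp: in_path_edges intro!: exI[of _ "i + k"])
  qed
  have "(ys ! k, ys ! Suc k) \<in> E" if "Suc k < length ys" for k
    using dpath_edge[OF d] edges nth_edge_in_path_edges[OF that] by blast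
  then show "dpath V E ys"
    using d sub ne by (auto simp: dpath_def)
  show "hd ys = xs ! i" "last ys = xs ! j"
    using nth[of 0] nth[of "j - i"] len ne assms(2) by (simp_all add: hd_conv_nth last_conv_nth)
qed

lemma subpath_between:
  assumes d: "dpath V E xs" and edges: "\<forall>e\<in>set (path_edges xs). P e \<and> f (fst e) < (f (snd e) :: real)"
    and "u \<in> set xs" "v \<in> set xs" "f u < f v"
  shows "\<exists>ys. dpath V E ys \<and> hd ys = u \<and> last ys = v \<and> (\<forall>e\<in>set (path_edges ys). P e)"
proof -
  obtain i j where ij: "i < length xs" "u = xs ! i" "j < length xs" "v = xs ! j"
    using assms(3,4) by (auto simp: in_set_conv_nth)
  have "\<not> j < i"
    using path_edges_chain[OF transp_on_less, of xs f j i] edges ij \<open>f u < f v\<close> by auto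
  then have "i \<le> j" by simp
  then obtain ys where "dpath V E ys" "hd ys = u" "last ys = v"
      "set (path_edges ys) \<subseteq> set (path_edges xs)"
    using dpath_segment[OF d, of i j] ij by metis
  then show ?thesis
    using edges by blast
qed

lemma common_vpath_imp_vpath:
  "common_vpath V E \<alpha> \<beta> u v \<Longrightarrow> \<beta> v < \<beta> u \<Longrightarrow> vpath V E \<alpha> \<beta> u v"
  unfolding common_vpath_def vpath_def
  using subpath_between[where f = "\<lambda>w. - \<beta> w" and P = "V_edge \<alpha> \<beta>"]
  by (fastforce simp: V_edge_def)

lemma common_hpath_imp_hpath:
  "common_hpath V E \<alpha> \<beta> u v \<Longrightarrow> \<alpha> u < \<alpha> v \<Longrightarrow> hpath V E \<alpha> \<beta> u v"
  unfolding common_hpath_def hpath_def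
  using subpath_between[where f = \<alpha> and P = "H_edge \<alpha> \<beta>"]
  by (fastforce simp: H_edge_def)

lemma hpath_beta_eq:
  assumes "hpath V E \<alpha> \<beta> u v"
  shows "\<beta> u = \<beta> v"
proof -
  obtain xs where xs: "dpath V E xs" "hd xs = u" "last xs = v" "\<forall>e\<in>set (path_edges xs). H_edge \<alpha> \<beta> e"
    using assms by (auto simp: hpath_def)
  then have "\<forall>e\<in>set (path_edges xs). \<beta> (fst e) = \<beta> (snd e)"
    by (auto simp: H_edge_def)
  then show ?thesis
    using path_edges_chain_mem[OF transp_on_equality reflp_on_equality, of xs \<beta> "last xs"] xs
    by (auto simp: dpath_def)
qed

lemma vpath_alpha_eq:
  assumes "vpath V E \<alpha> \<beta> u v"
  shows "\<alpha> u = \<alpha> v"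
proof -
  obtain xs where xs: "dpath V E xs" "hd xs = u" "last xs = v" "\<forall>e\<in>set (path_edges xs). V_edge \<alpha> \<beta> e"
    using assms by (auto simp: vpath_def)
  then have "\<forall>e\<in>set (path_edges xs). \<alpha> (fst e) = \<alpha> (snd e)"
    by (auto simp: V_edge_def)
  then show ?thesis
    using path_edges_chain_mem[OF transp_on_equality reflp_on_equality, of xs \<alpha> "last xs"] xs
    by (auto simp: dpath_def)
qed

lemma path_meets_level:
  "ys \<noteq> [] \<Longrightarrow> \<beta> (last ys) \<le> (y::real) \<Longrightarrow> y \<le> \<beta> (hd ys) \<Longrightarrow>
   (\<exists>w\<in>set ys. \<beta> w = y) \<or> (\<exists>e\<in>set (path_edges ys). \<beta> (snd e) < y \<and> y < \<beta> (fst e))"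
proof (induction ys rule: induct_list012)
  case (3 a b xs)
  then show ?case
    by (cases "\<beta> b \<le> y") (auto simp: path_edges_Cons_Cons)
qed auto

lemma vertical_closed_segment:
  fixes b b' y :: real
  assumes "b' < y" "y < b"
  shows "(a, y) \<in> closed_segment (a, b) (a, b')"
proof -
  define u where "u = (b - y) / (b - b')"
  have u: "0 \<le> u" "u \<le> 1"
    using assms by (auto simp: u_def field_simps)
  have "u * (b - b') = b - y"
    using assms by (simp add: u_def)
  then have "(a, y) = (1 - u) *\<^sub>R (a, b) + u *\<^sub>R (a, b')"
    by (simp add: algebra_simps)
  then show ?thesis
    unfolding closed_segment_def using u by blast
qed

section \<open>Words of path weights\<close>

definition edge_letters :: "('v \<Rightarrow> real) \<Rightarrow> ('v \<Rightarrow> real) \<Rightarrow> 'v list \<Rightarrow> 'v set \<Rightarrow> 'v \<times> 'v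
    \<Rightarrow> ('v \<times> bool) list" where
  "edge_letters \<alpha> \<beta> r W e =
     (if fst e \<in> set r then [(snd e, True)]
      else if H_edge \<alpha> \<beta> e \<and> fst e \<in> W \<and> snd e \<in> W then [(fst e, False), (snd e, True)]
      else [])"

definition path_letters :: "('v \<Rightarrow> real) \<Rightarrow> ('v \<Rightarrow> real) \<Rightarrow> 'v list \<Rightarrow> 'v set \<Rightarrow> 'v list
    \<Rightarrow> ('v \<times> bool) list" where
  "path_letters \<alpha> \<beta> r W xs = concat (map (edge_letters \<alpha> \<beta> r W) (path_edges xs))"

lemma path_wt_eq_letters:
  "path_wt \<alpha> \<beta> r W x xi xs = (\<Prod>a\<leftarrow>path_letters \<alpha> \<beta> r W xs. letter x xi a)"
proof -
  have "edge_wt \<alpha> \<beta> r W x xi = (\<lambda>e. \<Prod>a\<leftarrow>edge_letters \<alpha> \<beta> r W e. letter x xi a)"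
    by (simp add: fun_eq_iff edge_wt_def edge_letters_def letter_def)
  then show ?thesis
    by (simp add: path_wt_def path_letters_def map_concat prod_list_concat comp_def)
qed

text \<open>For u left of or below v, the relations of L_G read x u * x v = q^e * (x v * x u) with e
  this exponent.\<close>

definition commutation_exponent :: "('v \<Rightarrow> real) \<Rightarrow> ('v \<Rightarrow> real) \<Rightarrow> 'v \<Rightarrow> 'v \<Rightarrow> int" where
  "commutation_exponent \<alpha> \<beta> u v = of_bool (\<alpha> u = \<alpha> v) + of_bool (\<beta> u = \<beta> v)"

definition path_commutation_exponent :: "('v \<Rightarrow> real) \<Rightarrow> ('v \<Rightarrow> real) \<Rightarrow> 'v list \<Rightarrow> 'v set
    \<Rightarrow> 'v list \<Rightarrow> 'v list \<Rightarrow> int" where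
  "path_commutation_exponent \<alpha> \<beta> r W P Q =
     (\<Sum>a\<leftarrow>path_letters \<alpha> \<beta> r W P. \<Sum>b\<leftarrow>path_letters \<alpha> \<beta> r W Q.
        letter_sign a * letter_sign b * commutation_exponent \<alpha> \<beta> (fst a) (fst b))"

locale SE_graph =
  fixes V :: "'v set" and E :: "('v \<times> 'v) set" and \<alpha> \<beta> :: "'v \<Rightarrow> real" and r c :: "'v list"
  assumes graph: "se_graph V E \<alpha> \<beta> r c"
begin

lemma edges_in_V: "E \<subseteq> V \<times> V"
  using graph unfolding se_graph_def by (elim conjE) assumption

lemma edge_H_or_V [rule_format]: "\<forall>e\<in>E. H_edge \<alpha> \<beta> e \<or> V_edge \<alpha> \<beta> e"
  using graph unfolding se_graph_def by (elim conjE) assumption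

lemma pt_inj: "inj_on (pt \<alpha> \<beta>) V"
  using graph unfolding se_graph_def by (elim conjE) assumption

lemma vertex_on_edge [rule_format]:
  "\<forall>v\<in>V. \<forall>a b. (a, b) \<in> E \<longrightarrow> pt \<alpha> \<beta> v \<in> closed_segment (pt \<alpha> \<beta> a) (pt \<alpha> \<beta> b) \<longrightarrow> v = a \<or> v = b"
  using graph unfolding se_graph_def by (elim conjE) assumption

lemma sources_on_axis: "\<forall>i<length r. \<alpha> (r ! i) = 0 \<and> 0 \<le> \<beta> (r ! i)"
  using graph unfolding se_graph_def by (elim conjE) assumption

lemma source_edges: "\<forall>s\<in>set r. \<forall>a b. (a, b) \<in> E \<longrightarrow> b \<noteq> s \<and> (a = s \<longrightarrow> H_edge \<alpha> \<beta> (a, b))"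
  using graph unfolding se_graph_def by (elim conjE) assumption

lemma sink_edges: "\<forall>t\<in>set c. \<forall>a b. (a, b) \<in> E \<longrightarrow> a \<noteq> t \<and> (b = t \<longrightarrow> V_edge \<alpha> \<beta> (a, b))"
  using graph unfolding se_graph_def by (elim conjE) assumption

lemma on_source_sink_path [rule_format]:
  "\<forall>v\<in>V. \<exists>xs. dpath V E xs \<and> hd xs \<in> set r \<and> last xs \<in> set c \<and> v \<in> set xs"
  using graph unfolding se_graph_def by (elim conjE) assumption

lemma standing_convention [rule_format]:
  "\<forall>u\<in>V. \<forall>v\<in>V. (u \<in> inner V r c \<or> v \<in> inner V r c) \<longrightarrow>
     (\<alpha> u = \<alpha> v \<longleftrightarrow> common_vpath V E \<alpha> \<beta> u v) \<and> (\<beta> u = \<beta> v \<longleftrightarrow> common_hpath V E \<alpha> \<beta> u v)"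
  using graph unfolding se_graph_def by (elim conjE) assumption

lemma source_no_in_edge: "(u, v) \<in> E \<Longrightarrow> v \<notin> set r"
  using source_edges by blast

lemma source_out_edge_H: "(u, v) \<in> E \<Longrightarrow> u \<in> set r \<Longrightarrow> H_edge \<alpha> \<beta> (u, v)"
  using source_edges by blast

lemma sink_no_out_edge: "(u, v) \<in> E \<Longrightarrow> u \<notin> set c"
  using sink_edges by blast

lemma sink_in_edge_V: "(u, v) \<in> E \<Longrightarrow> v \<in> set c \<Longrightarrow> V_edge \<alpha> \<beta> (u, v)"
  using sink_edges by blast

lemma source_alpha: "s \<in> set r \<Longrightarrow> \<alpha> s = 0"
  using sources_on_axis by (auto simp: in_set_conv_nth)

lemma coords_inj: "u \<in> V \<Longrightarrow> v \<in> V \<Longrightarrow> \<alpha> u = \<alpha> v \<Longrightarrow> \<beta> u = \<beta> v \<Longrightarrow> u = v"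
  using pt_inj by (auto simp: inj_on_def pt_def)

lemma dpath_coords:
  assumes "dpath V E xs" "v \<in> set xs"
  shows "\<alpha> (hd xs) \<le> \<alpha> v \<and> \<alpha> v \<le> \<alpha> (last xs) \<and> \<beta> (last xs) \<le> \<beta> v \<and> \<beta> v \<le> \<beta> (hd xs)"
proof -
  have "\<forall>e\<in>set (path_edges xs). \<alpha> (fst e) \<le> \<alpha> (snd e)" "\<forall>e\<in>set (path_edges xs). \<beta> (fst e) \<ge> \<beta> (snd e)"
    using dpath_edge[OF assms(1)] edge_H_or_V by (fastforce simp: H_edge_def V_edge_def)+
  then show ?thesis
    using path_edges_chain_mem[OF transp_on_le reflp_on_le _ assms(2)]
      path_edges_chain_mem[OF transp_on_ge reflp_on_ge _ assms(2)] by auto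
qed

lemma alpha_nonneg: "v \<in> V \<Longrightarrow> 0 \<le> \<alpha> v"
  using on_source_sink_path dpath_coords source_alpha by fastforce

lemma standard_alpha_less:
  assumes "dpath V E xs" "standard \<alpha> \<beta> xs"
  shows "\<alpha> (hd xs) < \<alpha> (last xs)"
proof -
  obtain u v where uv: "(u, v) \<in> set (path_edges xs)" "H_edge \<alpha> \<beta> (u, v)"
    using assms(2) by (auto simp: standard_def)
  then have "u \<in> set xs" "v \<in> set xs"
    by (auto simp: in_path_edges)
  then show ?thesis
    using dpath_coords[OF assms(1), of u] dpath_coords[OF assms(1), of v] uv(2)
    by (auto simp: H_edge_def)
qed

lemma dpath_source_hd:
  assumes "dpath V E xs" "e \<in> set (path_edges xs)" "fst e \<in> set r"
  shows "fst e = hd xs"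
proof -
  obtain k where k: "Suc k < length xs" "e = (xs ! k, xs ! Suc k)"
    using assms(2) by (auto simp: in_path_edges)
  have "k = 0"
  proof (rule ccontr)
    assume "k \<noteq> 0"
    moreover have "(xs ! (k - 1), xs ! Suc (k - 1)) \<in> E"
      using k by (intro dpath_edge[OF assms(1)] nth_edge_in_path_edges) simp
    ultimately show False
      using source_no_in_edge assms(3) k by simp
  qed
  then show ?thesis
    using k by (cases xs) auto
qed

lemma vertex_on_vertical_path:
  assumes ys: "dpath V E ys" "\<forall>w\<in>set ys. \<alpha> w = \<alpha> p"
    and p: "p \<in> V" "\<beta> (last ys) \<le> \<beta> p" "\<beta> p \<le> \<beta> (hd ys)"
  shows "p \<in> set ys"
proof -
  have "ys \<noteq> []"
    using ys(1) by (simp add: dpath_def)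
  from path_meets_level[OF this p(2,3)] show ?thesis
  proof (elim disjE bexE)
    fix w assume w: "w \<in> set ys" "\<beta> w = \<beta> p"
    then have "p = w"
      using ys coords_inj[OF p(1), of w] by (auto simp: dpath_def)
    then show ?thesis
      using w(1) by simp
  next
    fix e assume e: "e \<in> set (path_edges ys)" "\<beta> (snd e) < \<beta> p \<and> \<beta> p < \<beta> (fst e)"
    have ends: "fst e \<in> set ys" "snd e \<in> set ys"
      using e(1) by (auto simp: in_path_edges)
    then have "pt \<alpha> \<beta> p \<in> closed_segment (pt \<alpha> \<beta> (fst e)) (pt \<alpha> \<beta> (snd e))"
      using vertical_closed_segment[of "\<beta> (snd e)" "\<beta> p" "\<beta> (fst e)" "\<alpha> p"] e(2) ys(2)
      by (simp add: pt_def)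
    then show ?thesis
      using vertex_on_edge[OF p(1), of "fst e" "snd e"] dpath_edge[OF ys(1) e(1)] ends by auto
  qed
qed

lemma edge_letters_inner:
  assumes "(u, v) \<in> E" "a \<in> set (edge_letters \<alpha> \<beta> r (inner V r c) (u, v))"
  shows "fst a \<in> inner V r c \<and> (fst a = u \<or> fst a = v)"
proof (cases "u \<in> set r")
  case True
  then have "H_edge \<alpha> \<beta> (u, v)"
    using source_out_edge_H assms(1) by blast
  then have "v \<notin> set c"
    using sink_in_edge_V assms(1) by (auto simp: H_edge_def V_edge_def)
  then show ?thesis
    using True assms edges_in_V source_no_in_edge by (auto simp: edge_letters_def inner_def)
qed (use assms in \<open>auto simp: edge_letters_def split: if_splits\<close>)

lemma path_letters_inner:
  assumes "dpath V E xs" "a \<in> set (path_letters \<alpha> \<beta> r (inner V r c) xs)"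
  shows "fst a \<in> inner V r c \<and> fst a \<in> set xs"
proof -
  obtain u v where e: "(u, v) \<in> set (path_edges xs)" "a \<in> set (edge_letters \<alpha> \<beta> r (inner V r c) (u, v))"
    using assms(2) by (auto simp: path_letters_def)
  have "u \<in> set xs" "v \<in> set xs"
    using e(1) by (auto simp: in_path_edges)
  then show ?thesis
    using edge_letters_inner[OF dpath_edge[OF assms(1) e(1)] e(2)] by auto
qed

lemma edge_letters_sum:
  assumes "(u, v) \<in> E"
  shows "(\<Sum>a\<leftarrow>edge_letters \<alpha> \<beta> r (inner V r c) (u, v). letter_sign a * g (fst a)) =
    (if u \<in> set r then g v else if H_edge \<alpha> \<beta> (u, v) then g v - g u else (0::int))"
proof -
  have "u \<in> inner V r c \<and> v \<in> inner V r c" if "u \<notin> set r" "H_edge \<alpha> \<beta> (u, v)"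
    using that assms edges_in_V source_no_in_edge sink_no_out_edge sink_in_edge_V
    by (auto simp: inner_def H_edge_def V_edge_def)
  then show ?thesis
    by (auto simp: edge_letters_def letter_sign_def)
qed

lemma path_letters_sum:
  assumes "dpath V E xs"
  shows "(\<Sum>a\<leftarrow>path_letters \<alpha> \<beta> r (inner V r c) xs. letter_sign a * g (fst a)) =
    (\<Sum>e\<leftarrow>path_edges xs. if fst e \<in> set r then g (snd e)
                           else if H_edge \<alpha> \<beta> e then g (snd e) - g (fst e) else (0::int))"
  unfolding path_letters_def map_concat sum_list_concat map_map
  by (intro arg_cong[where f = sum_list] map_cong)
     (auto simp: edge_letters_sum dpath_edge[OF assms] simp del: of_bool_eq)

lemma path_letters_sum_telescope:
  assumes "dpath V E xs"
    and "\<And>e. e \<in> set (path_edges xs) \<Longrightarrow> fst e \<in> set r \<Longrightarrow> g (fst e) = 0"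
    and "\<And>e. e \<in> set (path_edges xs) \<Longrightarrow> V_edge \<alpha> \<beta> e \<Longrightarrow> g (fst e) = g (snd e)"
  shows "(\<Sum>a\<leftarrow>path_letters \<alpha> \<beta> r (inner V r c) xs. letter_sign a * g (fst a)) = g (last xs) - g (hd xs)"
proof -
  have "(\<Sum>a\<leftarrow>path_letters \<alpha> \<beta> r (inner V r c) xs. letter_sign a * g (fst a)) =
      (\<Sum>e\<leftarrow>path_edges xs. g (snd e) - g (fst e))"
    unfolding path_letters_sum[OF assms(1)]
    using assms(2,3) edge_H_or_V dpath_edge[OF assms(1)]
    by (intro arg_cong[where f = sum_list] map_cong) fastforce+
  also have "\<dots> = g (last xs) - g (hd xs)"
    using assms(1) by (simp add: dpath_def sum_path_edges_telescope)
  finally show ?thesis .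
qed

lemma path_letters_sum_zero:
  assumes "dpath V E xs"
    and "\<And>e. e \<in> set (path_edges xs) \<Longrightarrow> fst e \<notin> set r"
    and "\<And>e. e \<in> set (path_edges xs) \<Longrightarrow> H_edge \<alpha> \<beta> e \<Longrightarrow> g (fst e) = g (snd e)"
  shows "(\<Sum>a\<leftarrow>path_letters \<alpha> \<beta> r (inner V r c) xs. letter_sign a * g (fst a)) = 0"
proof -
  have "(\<Sum>a\<leftarrow>path_letters \<alpha> \<beta> r (inner V r c) xs. letter_sign a * g (fst a)) = (\<Sum>e\<leftarrow>path_edges xs. 0)"
    unfolding path_letters_sum[OF assms(1)]
    using assms(2,3) by (intro arg_cong[where f = sum_list] map_cong) auto
  then show ?thesis
    by simp
qed

lemma crossing_column_order:
  assumes P: "dpath V E P" and Q: "dpath V E Q" and PQ: "set P \<inter> set Q = {}"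
    and a: "\<alpha> (last P) = \<alpha> (hd Q)" and b: "\<beta> (last P) < \<beta> (hd Q)"
    and u: "u \<in> set P" and v: "v \<in> set Q" and same_column: "\<alpha> u = \<alpha> v"
  shows "\<beta> u < \<beta> v"
proof (rule ccontr)
  assume "\<not> \<beta> u < \<beta> v"
  then have below: "\<beta> v \<le> \<beta> u" by simp
  have column: "\<alpha> u = \<alpha> (last P)" "\<alpha> v = \<alpha> (last P)"
    using dpath_coords[OF P u] dpath_coords[OF Q v] a same_column by auto
  obtain i j where ij: "i < length P" "P ! i = u" "j < length Q" "Q ! j = v"
    using u v by (auto simp: in_set_conv_nth)
  have "P \<noteq> []" "Q \<noteq> []"
    using P Q by (auto simp: dpath_def)
  then have ends: "last P = P ! (length P - 1)" "hd Q = Q ! 0"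
    by (simp_all add: last_conv_nth hd_conv_nth)
  have "i \<le> length P - 1" "length P - 1 < length P"
    using ij by auto
  then obtain S where S: "dpath V E S" "hd S = u" "last S = last P" "set S \<subseteq> set P"
    using dpath_segment[OF P] ij(2) ends(1) by metis
  obtain T where T: "dpath V E T" "hd T = hd Q" "last T = v" "set T \<subseteq> set Q"
    using dpath_segment[OF Q le0 ij(3)] ij(4) ends(2) by metis
  have S_column: "\<forall>w\<in>set S. \<alpha> w = \<alpha> (last P)"
    using dpath_coords[OF S(1)] S column by fastforce
  have T_column: "\<forall>w\<in>set T. \<alpha> w = \<alpha> (last P)"
    using dpath_coords[OF T(1)] T column a by fastforce
  have "v \<in> V" "last P \<in> V"
    using P Q v \<open>P \<noteq> []\<close> by (auto simp: dpath_def)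
  show False
  proof (cases "\<beta> (last P) \<le> \<beta> v")
    case True
    then have "v \<in> set S"
      using vertex_on_vertical_path[OF S(1) _ \<open>v \<in> V\<close>] S_column column S(2,3) below by simp
    then show False
      using S(4) v PQ by blast
  next
    case False
    then have "last P \<in> set T"
      using vertex_on_vertical_path[OF T(1) _ \<open>last P \<in> V\<close>] T_column T(2,3) b by simp
    then show False
      using T(4) last_in_set[OF \<open>P \<noteq> []\<close>] PQ by blast
  qed
qed

lemma crossing_row_order:
  assumes P: "dpath V E P" and Q: "dpath V E Q" and PQ: "set P \<inter> set Q = {}"
    and a: "\<alpha> (last P) = \<alpha> (hd Q)" and b: "\<beta> (last P) < \<beta> (hd Q)"
    and u: "u \<in> set P" and v: "v \<in> set Q" and same_row: "\<beta> u = \<beta> v"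
  shows "\<alpha> u < \<alpha> v"
proof -
  have "\<alpha> u \<le> \<alpha> v"
    using dpath_coords[OF P u] dpath_coords[OF Q v] a by auto
  moreover have "\<alpha> u \<noteq> \<alpha> v"
    using crossing_column_order[OF assms(1-7)] same_row by auto
  ultimately show ?thesis by simp
qed

lemma path_commutation_exponent_crossing:
  assumes P: "dpath V E P" "standard \<alpha> \<beta> P" and Q: "dpath V E Q" "standard \<alpha> \<beta> Q"
    and a: "\<alpha> (last P) = \<alpha> (hd Q)"
  shows "path_commutation_exponent \<alpha> \<beta> r (inner V r c) P Q = -1"
proof -
  define A where "A = \<alpha> (last P)"
  let ?LP = "path_letters \<alpha> \<beta> r (inner V r c) P" and ?LQ = "path_letters \<alpha> \<beta> r (inner V r c) Q"
  have "hd P \<in> V"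
    using P(1) by (auto simp: dpath_def)
  then have A_pos: "0 < A"
    using alpha_nonneg standard_alpha_less[OF P] by (force simp: A_def)
  have Q_sourceless: "fst e \<notin> set r" if "e \<in> set (path_edges Q)" for e
    using dpath_source_hd[OF Q(1) that] source_alpha A_pos a by (force simp: A_def)
  have Q_column: "(\<Sum>b\<leftarrow>?LQ. letter_sign b * of_bool (\<alpha> u = \<alpha> (fst b))) = - of_bool (\<alpha> u = A)"
    if "\<alpha> u \<le> A" for u
  proof -
    have "(\<Sum>b\<leftarrow>?LQ. letter_sign b * of_bool (\<alpha> u = \<alpha> (fst b))) =
        of_bool (\<alpha> u = \<alpha> (last Q)) - of_bool (\<alpha> u = \<alpha> (hd Q))"
      using Q_sourceless by (intro path_letters_sum_telescope[OF Q(1)]) (auto simp: V_edge_def)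
    then show ?thesis
      using standard_alpha_less[OF Q] that a by (simp add: A_def)
  qed
  have Q_row: "(\<Sum>b\<leftarrow>?LQ. letter_sign b * of_bool (\<beta> u = \<beta> (fst b))) = 0" for u
    using Q_sourceless by (intro path_letters_sum_zero[OF Q(1)]) (auto simp: H_edge_def)
  have P_column: "(\<Sum>a\<leftarrow>?LP. letter_sign a * of_bool (\<alpha> (fst a) = A)) = 1"
  proof -
    have "(\<Sum>a\<leftarrow>?LP. letter_sign a * of_bool (\<alpha> (fst a) = A)) =
        of_bool (\<alpha> (last P) = A) - of_bool (\<alpha> (hd P) = A)"
      using source_alpha A_pos by (intro path_letters_sum_telescope[OF P(1)]) (auto simp: V_edge_def)
    then show ?thesis
      using standard_alpha_less[OF P] by (simp add: A_def)
  qed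
  have split: "(\<Sum>b\<leftarrow>bs. s * letter_sign b * (f b + g b)) =
      s * ((\<Sum>b\<leftarrow>bs. letter_sign b * f b) + (\<Sum>b\<leftarrow>bs. letter_sign b * g b))" for bs and s :: int and f g
    by (induction bs) (simp_all add: algebra_simps)
  have "path_commutation_exponent \<alpha> \<beta> r (inner V r c) P Q =
      (\<Sum>a\<leftarrow>?LP. - (letter_sign a * of_bool (\<alpha> (fst a) = A)))"
    unfolding path_commutation_exponent_def commutation_exponent_def split
  proof (intro arg_cong[where f = sum_list] map_cong refl)
    fix a assume "a \<in> set ?LP"
    then have "fst a \<in> set P"
      using path_letters_inner[OF P(1)] by blast
    then have "\<alpha> (fst a) \<le> A"
      using dpath_coords[OF P(1)] by (simp add: A_def)
    then show "letter_sign a * ((\<Sum>b\<leftarrow>?LQ. letter_sign b * of_bool (\<alpha> (fst a) = \<alpha> (fst b))) +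
        (\<Sum>b\<leftarrow>?LQ. letter_sign b * of_bool (\<beta> (fst a) = \<beta> (fst b)))) =
        - (letter_sign a * of_bool (\<alpha> (fst a) = A))"
      using Q_column Q_row by simp
  qed
  also have "\<dots> = -1"
    using P_column uminus_sum_list_map[of "\<lambda>a. letter_sign a * of_bool (\<alpha> (fst a) = A)" ?LP]
    by (simp add: comp_def)
  finally show ?thesis .
qed

end

locale SE_torus = SE_graph V E \<alpha> \<beta> r c
  for V :: "'v set" and E \<alpha> \<beta> r c +
  fixes emb :: "'k::field \<Rightarrow> 'a::ring_1" and q :: 'k and x xi :: "'v \<Rightarrow> 'a"
  assumes q_nonzero: "q \<noteq> 0" and scalar: "scalar_embedding emb"
    and x_inverse: "\<And>w. w \<in> inner V r c \<Longrightarrow> x w * xi w = 1 \<and> xi w * x w = 1"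
    and relations: "LG_relations V E \<alpha> \<beta> (inner V r c) (emb q) x"
begin

lemma x_qcomm:
  assumes u: "u \<in> inner V r c" and v: "v \<in> inner V r c"
    and col: "\<alpha> u = \<alpha> v \<Longrightarrow> \<beta> u < \<beta> v" and row: "\<beta> u = \<beta> v \<Longrightarrow> \<alpha> u < \<alpha> v"
  shows "qcomm emb q (x u) (x v) (commutation_exponent \<alpha> \<beta> u v)"
proof -
  have uv: "u \<in> V" "v \<in> V" "u \<noteq> v"
    using u v col by (auto simp: inner_def)
  note rel = relations[unfolded LG_relations_def, rule_format, OF u v uv(3)]
    and rel' = relations[unfolded LG_relations_def, rule_format, OF v u uv(3)[symmetric]]
  consider (same_column) "\<alpha> u = \<alpha> v" | (same_row) "\<beta> u = \<beta> v" "\<alpha> u \<noteq> \<alpha> v" | (generic) "\<alpha> u \<noteq> \<alpha> v" "\<beta> u \<noteq> \<beta> v"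
    by blast
  then show ?thesis
  proof cases
    case same_column
    then have "vpath V E \<alpha> \<beta> v u"
      using standing_convention[OF uv(2,1)] v col common_vpath_imp_vpath by auto
    then show ?thesis
      using rel' same_column col by (simp add: qcomm_def commutation_exponent_def)
  next
    case same_row
    then have "hpath V E \<alpha> \<beta> u v"
      using standing_convention[OF uv(1,2)] u row common_hpath_imp_hpath by auto
    then show ?thesis
      using rel same_row by (simp add: qcomm_def commutation_exponent_def)
  next
    case generic
    then have "x u * x v = x v * x u"
      using rel hpath_beta_eq vpath_alpha_eq by metis
    then show ?thesis
      using generic emb_one[OF scalar] by (simp add: qcomm_def commutation_exponent_def)
  qed
qed

lemma path_wt_qcomm:
  assumes P: "dpath V E P" and Q: "dpath V E Q"
    and col: "\<And>u v. u \<in> set P \<Longrightarrow> v \<in> set Q \<Longrightarrow> \<alpha> u = \<alpha> v \<Longrightarrow> \<beta> u < \<beta> v"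
    and row: "\<And>u v. u \<in> set P \<Longrightarrow> v \<in> set Q \<Longrightarrow> \<beta> u = \<beta> v \<Longrightarrow> \<alpha> u < \<alpha> v"
  shows "qcomm emb q (path_wt \<alpha> \<beta> r (inner V r c) x xi P) (path_wt \<alpha> \<beta> r (inner V r c) x xi Q)
           (path_commutation_exponent \<alpha> \<beta> r (inner V r c) P Q)"
  unfolding path_wt_eq_letters path_commutation_exponent_def
proof (rule qcomm_prod_list[OF scalar q_nonzero])
  fix a b
  assume "a \<in> set (path_letters \<alpha> \<beta> r (inner V r c) P)" "b \<in> set (path_letters \<alpha> \<beta> r (inner V r c) Q)"
  then have a: "fst a \<in> inner V r c" "fst a \<in> set P" and b: "fst b \<in> inner V r c" "fst b \<in> set Q"
    using path_letters_inner[OF P] path_letters_inner[OF Q] by auto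
  show "qcomm emb q (letter x xi a) (letter x xi b)
      (letter_sign a * letter_sign b * commutation_exponent \<alpha> \<beta> (fst a) (fst b))"
    using qcomm_letter[OF scalar q_nonzero x_qcomm[OF a(1) b(1)]] col row a b x_inverse by blast
qed

end

theorem lemmaA5:
  fixes V :: "'v set" and E :: "('v \<times> 'v) set" and \<alpha> \<beta> :: "'v \<Rightarrow> real"
    and r c :: "'v list"
    and emb :: "'k::field \<Rightarrow> 'a::ring_1" and q :: 'k and x xi :: "'v \<Rightarrow> 'a"
    and P Q :: "'v list"
  assumes G: "se_graph V E \<alpha> \<beta> r c"
    and q: "q \<noteq> 0"
    and alg: "scalar_embedding emb"
    and inv: "\<forall>w\<in>inner V r c. x w * xi w = 1 \<and> xi w * x w = 1"
    and rel: "LG_relations V E \<alpha> \<beta> (inner V r c) (emb q) x"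
    and P: "dpath V E P" "standard \<alpha> \<beta> P"
    and Q: "dpath V E Q" "standard \<alpha> \<beta> Q"
    and PQ: "weakly_intersecting P Q"
    and a: "\<alpha> (last P) = \<alpha> (hd Q)"
    and b: "\<beta> (last P) < \<beta> (hd Q)"
  shows "path_wt \<alpha> \<beta> r (inner V r c) x xi P * path_wt \<alpha> \<beta> r (inner V r c) x xi Q
         = emb (inverse q) * (path_wt \<alpha> \<beta> r (inner V r c) x xi Q * path_wt \<alpha> \<beta> r (inner V r c) x xi P)"
proof -
  interpret SE_torus V E \<alpha> \<beta> r c emb q x xi
    using G q alg inv rel by unfold_locales auto
  have "hd P \<notin> {hd Q, last Q}" "last P \<notin> {hd Q, last Q}"
    using standard_alpha_less[OF P] standard_alpha_less[OF Q] a b by auto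
  then have disjoint: "set P \<inter> set Q = {}"
    using PQ unfolding weakly_intersecting_def by auto
  have "qcomm emb q (path_wt \<alpha> \<beta> r (inner V r c) x xi P) (path_wt \<alpha> \<beta> r (inner V r c) x xi Q) (-1)"
    using path_wt_qcomm[OF P(1) Q(1)] crossing_column_order[OF P(1) Q(1) disjoint a b]
      crossing_row_order[OF P(1) Q(1) disjoint a b] path_commutation_exponent_crossing[OF P Q a]
    by simp
  then show ?thesis
    by (simp add: qcomm_def power_int_minus)
qed

end
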